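(* Let $T$ be a tree with $k$ vertices and $t:=\sigma(T)-1$. Let $\mathcal{H}$ be a $3$-graph on vertex set $V$, let $S_1,S_2\subseteq V$ be two distinct $t$-subsets, and let $V_1,V_2\subseteq V\setminus(S_1\cup S_2)$ be two sets with $V_1\cap V_2\ne\emptyset$. Suppose there are graphs $G_1$ on $V_1$ and $G_2$ on $V_2$ such that for each $i\in\{1,2\}$: (i) $d_{G_i}(v)\ge 3k$ for all $v\in V_i$, and (ii) $G_i\subseteq L_{\mathcal{H}}(v)$ for all $v\in S_i$. Then $\mathcal{H}$ contains a copy of $T^3$.
   Context: For a graph $F$, $|F|$ is its number of edges and $F-I$ the subgraph induced on $V(F)\setminus I$; $\sigma(F)=\min\{|I|+|F-I| : I\text{ independent in }F\}$. For a $3$-graph $\mathcal{H}$, the link of a vertex $v$ is the graph $L_{\mathcal{H}}(v)=\{uw: uvw\in\mathcal{H}\}$. The expansion $T^3$ is the $3$-graph obtained from $T$ by adding to each edge a new vertex, distinct edges receiving distinct new vertices. *)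

theory Defs
  imports Main
begin

definition graph_on :: "'a set \<Rightarrow> 'a set set \<Rightarrow> bool" where
  "graph_on VF EF \<longleftrightarrow> finite VF \<and> (\<forall>e\<in>EF. e \<subseteq> VF \<and> card e = 2)"

definition degree :: "'a set set \<Rightarrow> 'a \<Rightarrow> nat" where
  "degree EF v = card {e \<in> EF. v \<in> e}"

definition connected_graph :: "'a set \<Rightarrow> 'a set set \<Rightarrow> bool" where
  "connected_graph VF EF \<longleftrightarrow>
     (\<forall>x\<in>VF. \<forall>y\<in>VF. (x, y) \<in> {(u, w). {u, w} \<in> EF}\<^sup>*)"

definition has_cycle :: "'a set set \<Rightarrow> bool" where
  "has_cycle EF \<longleftrightarrow> (\<exists>cs. length cs \<ge> 3 \<and> distinct cs \<and>
     (\<forall>i < length cs - 1. {cs ! i, cs ! (i + 1)} \<in> EF) \<and> {last cs, hd cs} \<in> EF)"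

definition is_tree :: "'a set \<Rightarrow> 'a set set \<Rightarrow> bool" where
  "is_tree VF EF \<longleftrightarrow> graph_on VF EF \<and> VF \<noteq> {} \<and> connected_graph VF EF \<and> \<not> has_cycle EF"

definition independent :: "'a set set \<Rightarrow> 'a set \<Rightarrow> bool" where
  "independent EF I \<longleftrightarrow> (\<forall>e\<in>EF. \<not> e \<subseteq> I)"

text \<open>|F - I|: number of edges of the subgraph induced on V(F) minus I.\<close>
definition edges_outside :: "'a set set \<Rightarrow> 'a set \<Rightarrow> nat" where
  "edges_outside EF I = card {e \<in> EF. e \<inter> I = {}}"

definition sigma :: "'a set \<Rightarrow> 'a set set \<Rightarrow> nat" where
  "sigma VF EF = Min {card I + edges_outside EF I | I. I \<subseteq> VF \<and> independent EF I}"

definition hypergraph3_on :: "'b set \<Rightarrow> 'b set set \<Rightarrow> bool" where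
  "hypergraph3_on V H \<longleftrightarrow> (\<forall>e\<in>H. e \<subseteq> V \<and> card e = 3)"

definition link :: "'b set set \<Rightarrow> 'b \<Rightarrow> 'b set set" where
  "link H v = {{u, w} | u w. {u, v, w} \<in> H}"

text \<open>Expansion T^3: vertices Inl x for x in V(T), new vertex Inr e for each edge e.\<close>
definition expansion_vertices :: "'a set \<Rightarrow> 'a set set \<Rightarrow> ('a + 'a set) set" where
  "expansion_vertices VF EF = Inl ` VF \<union> Inr ` EF"

definition expansion_edges :: "'a set set \<Rightarrow> ('a + 'a set) set set" where
  "expansion_edges EF = {insert (Inr e) (Inl ` e) | e. e \<in> EF}"

definition contains_copy :: "'b set \<Rightarrow> 'b set set \<Rightarrow> 'c set \<Rightarrow> 'c set set \<Rightarrow> bool" where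
  "contains_copy V H W F \<longleftrightarrow>
     (\<exists>f. inj_on f W \<and> f ` W \<subseteq> V \<and> (\<forall>e\<in>F. f ` e \<in> H))"

end

theory Submission
  imports Defs
begin

text \<open>Take an independent set \<open>I\<close> attaining \<open>\<sigma>(T) = t + 1\<close>. As \<open>S1 \<noteq> S2\<close> forces
  \<open>\<sigma>(T) \<ge> 2\<close>, some vertex \<open>z \<notin> I\<close> has two neighbours \<open>y0, y1\<close>; let \<open>B\<close> be the
  branch of \<open>T - z\<close> at \<open>y0\<close>. The \<open>t + 1\<close> items (vertices of \<open>I\<close> and edges of \<open>T - I\<close>)
  are sent injectively into \<open>S1 \<union> S2\<close>, those meeting \<open>B\<close> into \<open>S2\<close> and the others
  into \<open>S1\<close>: both groups are nonempty, so \<open>S1 \<noteq> S2\<close> leaves enough room.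
  Then \<open>T\<^sup>3\<close> is embedded greedily, leaf by leaf, starting from \<open>z \<mapsto> w \<in> V1 \<inter> V2\<close>:
  the remaining vertices of \<open>B\<close> go to \<open>V2\<close>, the others to \<open>V1\<close>, and the hyperedge of
  each new edge consists of the image of its item together with an edge of \<open>G1\<close> or \<open>G2\<close>
  in that item's link. Since all degrees are at least \<open>3k > |V(T\<^sup>3)|\<close>, a fresh neighbour is
  always available.\<close>

section \<open>Graphs, walks and trees\<close>

lemma graph_on_edgeD:
  assumes "graph_on VF EF" "{a, b} \<in> EF"
  shows "a \<noteq> b" "a \<in> VF" "b \<in> VF"
  using assms unfolding graph_on_def by (auto simp: card_2_iff)

lemma graph_on_edgeE:
  assumes "graph_on VF EF" "e \<in> EF"
  obtains a b where "e = {a, b}" "a \<noteq> b"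
  using assms unfolding graph_on_def by (meson card_2_iff)

lemma graph_on_edge_at:
  assumes "graph_on VF EF" "e \<in> EF" "x \<in> e"
  obtains y where "e = {x, y}" "y \<noteq> x"
proof -
  obtain a b where "e = {a, b}" "a \<noteq> b" using graph_on_edgeE[OF assms(1,2)] .
  then show thesis using assms(3) that by (auto simp: insert_commute)
qed

lemma graph_on_finite_edges: "graph_on VF EF \<Longrightarrow> finite EF"
  unfolding graph_on_def by (meson Pow_iff finite_Pow_iff finite_subset subsetI)

lemma graph_on_singleton_no_edges:
  assumes "graph_on {z} EF"
  shows "EF = {}"
proof (rule equals0I)
  fix e assume "e \<in> EF"
  then have "e \<subseteq> {z}" "card e = 2" using assms unfolding graph_on_def by auto
  then show False using card_mono[of "{z}" e] by simp
qed

lemma exists_fresh_neighbour: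
  assumes "graph_on VF EF" "finite X" "card X < degree EF x"
  obtains y where "{x, y} \<in> EF" "y \<notin> X"
proof (rule ccontr)
  assume "\<not> thesis"
  have "{e \<in> EF. x \<in> e} \<subseteq> (\<lambda>y. {x, y}) ` X"
  proof
    fix e assume "e \<in> {e \<in> EF. x \<in> e}"
    then obtain y where "e = {x, y}" "e \<in> EF" using graph_on_edge_at[OF assms(1)] by blast
    then show "e \<in> (\<lambda>y. {x, y}) ` X" using that \<open>\<not> thesis\<close> by blast
  qed
  then have "degree EF x \<le> card ((\<lambda>y. {x, y}) ` X)"
    unfolding degree_def using assms(2) by (intro card_mono) auto
  also have "\<dots> \<le> card X" using assms(2) by (rule card_image_le)
  finally show False using assms(3) by simp
qed

lemma link_edge_imp_hyperedge: "{a, b} \<in> link H s \<Longrightarrow> insert s {a, b} \<in> H"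
  unfolding link_def by (auto simp: doubleton_eq_iff insert_commute)

definition walk :: "'a set set \<Rightarrow> 'a list \<Rightarrow> bool" where
  "walk E cs \<longleftrightarrow> (\<forall>i < length cs - 1. {cs ! i, cs ! (i + 1)} \<in> E)"

lemma walk_snoc:
  assumes "walk E cs" "cs \<noteq> []" "{last cs, x} \<in> E"
  shows "walk E (cs @ [x])"
  unfolding walk_def
proof (intro allI impI)
  fix i assume i: "i < length (cs @ [x]) - 1"
  show "{(cs @ [x]) ! i, (cs @ [x]) ! (i + 1)} \<in> E"
  proof (cases "i < length cs - 1")
    case True
    then have "Suc i < length cs" by simp
    then show ?thesis using True assms(1) unfolding walk_def by (simp add: nth_append)
  next
    case False
    then have "i = length cs - 1" using i by simp
    then show ?thesis using assms(2,3) by (simp add: nth_append last_conv_nth)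
  qed
qed

lemma walk_Cons:
  assumes "walk E cs" "cs \<noteq> []" "{x, hd cs} \<in> E"
  shows "walk E (x # cs)"
  unfolding walk_def
proof (intro allI impI)
  fix i assume "i < length (x # cs) - 1"
  then show "{(x # cs) ! i, (x # cs) ! (i + 1)} \<in> E"
    using assms unfolding walk_def by (cases i) (auto simp: hd_conv_nth)
qed

lemma walk_take: "walk E cs \<Longrightarrow> walk E (take n cs)"
  unfolding walk_def by auto

lemma walk_drop: "walk E cs \<Longrightarrow> walk E (drop n cs)"
  unfolding walk_def by (auto simp: add.commute add.left_commute)

lemma walk_mono: "E \<subseteq> E' \<Longrightarrow> walk E cs \<Longrightarrow> walk E' cs"
  unfolding walk_def by auto

lemma has_cycle_iff_walk:
  "has_cycle E \<longleftrightarrow> (\<exists>cs. 3 \<le> length cs \<and> distinct cs \<and> walk E cs \<and> {last cs, hd cs} \<in> E)"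
  unfolding has_cycle_def walk_def by simp

lemma path_of_rtrancl:
  assumes "(a, b) \<in> {(x, y). {x, y} \<in> E}\<^sup>*"
  obtains cs where "cs \<noteq> []" "hd cs = a" "last cs = b" "distinct cs" "walk E cs"
  using assms
proof (induction arbitrary: thesis rule: rtrancl_induct)
  case base
  show ?case by (rule base[of "[a]"]) (simp_all add: walk_def)
next
  case (step y x)
  obtain cs where cs: "cs \<noteq> []" "hd cs = a" "last cs = y" "distinct cs" "walk E cs"
    using step.IH .
  show ?case
  proof (cases "x \<in> set cs")
    case True
    then obtain j where j: "j < length cs" "cs ! j = x" by (auto simp: in_set_conv_nth)
    show ?thesis
      by (rule step.prems[of "take (Suc j) cs"])
        (use j cs in \<open>auto simp: walk_take last_conv_nth hd_conv_nth min_def intro: arg_cong[where f = "(!) cs"]\<close>)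
  next
    case False
    show ?thesis
      by (rule step.prems[of "cs @ [x]"]) (use cs False step.hyps(2) in \<open>auto simp: walk_snoc\<close>)
  qed
qed

text \<open>An earlier vertex of the path would close a cycle.\<close>
lemma acyclic_path_end_neighbour:
  assumes "\<not> has_cycle E" "distinct cs" "walk E cs"
    and "{last cs, y} \<in> E" "y \<in> set cs" "y \<noteq> last cs"
  shows "y = cs ! (length cs - 2)"
proof -
  obtain i where i: "i < length cs" "cs ! i = y" using assms(5) by (auto simp: in_set_conv_nth)
  have "cs \<noteq> []" using i by auto
  then have "i \<noteq> length cs - 1" using i assms(6) by (auto simp: last_conv_nth)
  moreover have "\<not> i < length cs - 2"
  proof
    assume "i < length cs - 2"
    then have "3 \<le> length (drop i cs)" "hd (drop i cs) = y" "last (drop i cs) = last cs"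
      using i by (auto simp: hd_drop_conv_nth)
    then have "has_cycle E"
      unfolding has_cycle_iff_walk using assms(2-4) walk_drop by (metis distinct_drop)
    then show False using assms(1) by simp
  qed
  ultimately have "i = length cs - 2" using i(1) by linarith
  then show ?thesis using i(2) by simp
qed

lemma maximal_path_exists:
  assumes g: "graph_on VT ET" and zy: "{z, y} \<in> ET"
  obtains cs where "hd cs = z" "2 \<le> length cs" "distinct cs" "walk ET cs"
    "\<And>x. {last cs, x} \<in> ET \<Longrightarrow> x \<in> set cs"
proof -
  define path where "path cs \<longleftrightarrow> cs \<noteq> [] \<and> hd cs = z \<and> distinct cs \<and> set cs \<subseteq> VT \<and> walk ET cs"
    for cs
  have "path [z, y]" unfolding path_def walk_def using graph_on_edgeD[OF g zy] zy by auto
  moreover have "path cs \<Longrightarrow> length cs < Suc (card VT)" for cs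
    using g unfolding path_def graph_on_def by (metis card_mono distinct_card less_Suc_eq_le)
  ultimately obtain cs where cs: "path cs" and cs_max: "\<And>cs'. path cs' \<Longrightarrow> length cs' \<le> length cs"
    using ex_has_greatest_nat[of path "[z, y]" length "Suc (card VT)"] by blast
  have "2 \<le> length cs" using cs_max[OF \<open>path [z, y]\<close>] by simp
  moreover have "x \<in> set cs" if "{last cs, x} \<in> ET" for x
  proof (rule ccontr)
    assume "x \<notin> set cs"
    then have "path (cs @ [x])"
      using cs graph_on_edgeD(3)[OF g that] that unfolding path_def by (auto simp: walk_snoc)
    then show False using cs_max by fastforce
  qed
  ultimately show thesis using that cs unfolding path_def by blast
qed

text \<open>The end of a maximal path from \<open>z\<close> is a leaf.\<close>
lemma tree_has_leaf:
  assumes T: "is_tree VT ET" and z: "z \<in> VT" and two: "2 \<le> card VT"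
  obtains v u where "v \<in> VT" "v \<noteq> z" "{u, v} \<in> ET" "\<forall>y. {v, y} \<in> ET \<longrightarrow> y = u"
proof -
  have g: "graph_on VT ET" and nc: "\<not> has_cycle ET" and con: "connected_graph VT ET"
    using T unfolding is_tree_def by auto
  have "\<not> VT \<subseteq> {z}" using two card_mono[of "{z}" VT] g unfolding graph_on_def by auto
  then obtain x where "x \<in> VT" "x \<noteq> z" by blast
  then have "(z, x) \<in> {(a, b). {a, b} \<in> ET}\<^sup>*" using con z unfolding connected_graph_def by blast
  then obtain y0 where y0: "{z, y0} \<in> ET" using \<open>x \<noteq> z\<close> by (auto elim: converse_rtranclE)
  obtain cs where cs: "hd cs = z" "2 \<le> length cs" "distinct cs" "walk ET cs"
    and cs_max: "\<And>x. {last cs, x} \<in> ET \<Longrightarrow> x \<in> set cs"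
    using maximal_path_exists[OF g y0] by blast
  define n where "n = length cs"
  define v where "v = last cs"
  define u where "u = cs ! (n - 2)"
  have "cs \<noteq> []" using cs(2) by auto
  then have v_nth: "v = cs ! (n - 1)" and z_nth: "z = cs ! 0"
    using cs(1) unfolding v_def n_def by (auto simp: last_conv_nth hd_conv_nth)
  have "v \<noteq> z"
    using nth_eq_iff_index_eq[OF cs(3), of "n - 1" 0] cs(2) \<open>cs \<noteq> []\<close> unfolding v_nth z_nth n_def by simp
  moreover have "{u, v} \<in> ET"
  proof -
    have "n - 2 < length cs - 1" "n - 2 + 1 = n - 1" using cs(2) unfolding n_def by arith+
    then show ?thesis using cs(4) unfolding walk_def u_def v_nth by metis
  qed
  moreover have "y = u" if "{v, y} \<in> ET" for y
    using acyclic_path_end_neighbour[OF nc cs(3,4)] cs_max graph_on_edgeD(1)[OF g that] that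
    unfolding u_def v_def n_def by auto
  ultimately show thesis using that graph_on_edgeD(3)[OF g] by blast
qed

lemma edge_at_leaf:
  assumes "graph_on VT ET" "e \<in> ET" "v \<in> e" and leaf: "\<forall>y. {v, y} \<in> ET \<longrightarrow> y = u"
  shows "e = {u, v}"
proof -
  obtain y where "e = {v, y}" using graph_on_edge_at[OF assms(1-3)] .
  then show ?thesis using leaf assms(2) by auto
qed

lemma tree_remove_leaf:
  assumes T: "is_tree VT ET" and v: "v \<in> VT" and uv: "{u, v} \<in> ET"
    and leaf: "\<forall>y. {v, y} \<in> ET \<longrightarrow> y = u"
  shows "is_tree (VT - {v}) (ET - {{u, v}})"
proof -
  have g: "graph_on VT ET" and con: "connected_graph VT ET" and nc: "\<not> has_cycle ET"
    using T unfolding is_tree_def by auto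
  have "u \<noteq> v" "u \<in> VT" using graph_on_edgeD[OF g uv] by auto
  have "v \<notin> e" if "e \<in> ET - {{u, v}}" for e using edge_at_leaf[OF g _ _ leaf] that by blast
  then have g': "graph_on (VT - {v}) (ET - {{u, v}})" using g unfolding graph_on_def by blast
  have nc': "\<not> has_cycle (ET - {{u, v}})" using nc unfolding has_cycle_def by blast
  let ?R = "{(a, b). {a, b} \<in> ET}"
  let ?R' = "{(a, b). {a, b} \<in> ET - {{u, v}}}"
  have reroute: "(x, y) \<in> ?R\<^sup>* \<Longrightarrow> x \<noteq> v \<Longrightarrow> (x, if y = v then u else y) \<in> ?R'\<^sup>*" for x y
  proof (induction rule: rtrancl_induct)
    case (step y y')
    then have yy': "{y, y'} \<in> ET" by simp
    consider "y = v" | "y' = v" | "y \<noteq> v" "y' \<noteq> v" by blast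
    then show ?case
    proof cases
      case 1
      then have "y' = u" using leaf yy' by simp
      then show ?thesis using 1 step.IH step.prems \<open>u \<noteq> v\<close> by simp
    next
      case 2
      then show ?thesis using leaf yy' step.IH step.prems \<open>u \<noteq> v\<close> by (simp add: insert_commute)
    next
      case 3
      then have "(y, y') \<in> ?R'" using yy' by auto
      then show ?thesis using 3 step.IH step.prems by (simp add: rtrancl_into_rtrancl)
    qed
  qed simp
  have "connected_graph (VT - {v}) (ET - {{u, v}})"
    unfolding connected_graph_def
  proof (intro ballI)
    fix x y assume "x \<in> VT - {v}" "y \<in> VT - {v}"
    then show "(x, y) \<in> ?R'\<^sup>*" using reroute[of x y] con unfolding connected_graph_def by auto
  qed
  then show ?thesis using g' nc' \<open>u \<in> VT\<close> \<open>u \<noteq> v\<close> unfolding is_tree_def by blast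
qed

lemma tree_leaf_induct [consumes 2, case_names single add_leaf]:
  assumes "is_tree VT ET" "z \<in> VT"
    and single: "P {z} {}"
    and add_leaf: "\<And>VT ET u v. is_tree VT ET \<Longrightarrow> z \<in> VT \<Longrightarrow> u \<in> VT \<Longrightarrow> v \<notin> VT \<Longrightarrow>
      is_tree (insert v VT) (insert {u, v} ET) \<Longrightarrow> P VT ET \<Longrightarrow> P (insert v VT) (insert {u, v} ET)"
  shows "P VT ET"
  using assms(1,2)
proof (induction "card VT" arbitrary: VT ET rule: less_induct)
  case less
  have g: "graph_on VT ET" and fin: "finite VT" using less.prems unfolding is_tree_def graph_on_def by auto
  show ?case
  proof (cases "2 \<le> card VT")
    case False
    then have "VT = {z}" using less.prems(2) fin card_le_Suc0_iff_eq[of VT] by auto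
    moreover have "ET = {}" using graph_on_singleton_no_edges g \<open>VT = {z}\<close> by simp
    ultimately show ?thesis using single by simp
  next
    case True
    obtain v u where v: "v \<in> VT" "v \<noteq> z" and uv: "{u, v} \<in> ET"
      and leaf: "\<forall>y. {v, y} \<in> ET \<longrightarrow> y = u"
      using tree_has_leaf[OF less.prems True] by blast
    have T': "is_tree (VT - {v}) (ET - {{u, v}})" using tree_remove_leaf[OF less.prems(1) v(1) uv leaf] .
    have "u \<in> VT - {v}" using graph_on_edgeD[OF g uv] by auto
    moreover have "P (VT - {v}) (ET - {{u, v}})"
      using less.hyps[OF card_Diff1_less[OF fin v(1)] T'] less.prems(2) v by simp
    ultimately have "P (insert v (VT - {v})) (insert {u, v} (ET - {{u, v}}))"
      using add_leaf[OF T', of u v] less.prems v uv by (simp add: insert_absorb)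
    then show ?thesis using v uv by (simp add: insert_absorb)
  qed
qed

lemma tree_card_edges:
  assumes "is_tree VT ET"
  shows "card ET + 1 = card VT"
proof -
  obtain z where "z \<in> VT" using assms unfolding is_tree_def by blast
  with assms show ?thesis
  proof (induction rule: tree_leaf_induct)
    case (add_leaf VT ET u v)
    have "finite VT" "finite ET" "{u, v} \<notin> ET"
      using add_leaf.hyps(1,4) graph_on_edgeD(3)[of VT ET u v] graph_on_finite_edges
      unfolding is_tree_def graph_on_def by auto
    then show ?case using add_leaf.hyps(4) add_leaf.IH by simp
  qed simp
qed

section \<open>The parameter \<open>\<sigma>\<close>\<close>

lemma sigma_as_Min_image:
  "sigma VT ET = Min ((\<lambda>I. card I + edges_outside ET I) ` {I. I \<subseteq> VT \<and> independent ET I})"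
  unfolding sigma_def by (rule arg_cong[where f = Min]) blast

lemma finite_independent_sets: "graph_on VT ET \<Longrightarrow> finite {I. I \<subseteq> VT \<and> independent ET I}"
  unfolding graph_on_def by (auto intro: finite_subset[of _ "Pow VT"])

lemma sigma_attained:
  assumes "graph_on VT ET"
  obtains I where "I \<subseteq> VT" "independent ET I" "card I + edges_outside ET I = sigma VT ET"
proof -
  have "finite {I. I \<subseteq> VT \<and> independent ET I}" by (rule finite_independent_sets[OF assms])
  moreover have "independent ET {}" using graph_on_edgeE[OF assms] unfolding independent_def by blast
  ultimately have "sigma VT ET \<in> (\<lambda>I. card I + edges_outside ET I) ` {I. I \<subseteq> VT \<and> independent ET I}"
    unfolding sigma_as_Min_image by (intro Min_in finite_imageI) blast+
  then obtain I where "I \<subseteq> VT" "independent ET I" "sigma VT ET = card I + edges_outside ET I"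
    by blast
  then show thesis using that by simp
qed

lemma sigma_le:
  assumes "graph_on VT ET" "J \<subseteq> VT" "independent ET J"
  shows "sigma VT ET \<le> card J + edges_outside ET J"
proof -
  have "finite {I. I \<subseteq> VT \<and> independent ET I}" by (rule finite_independent_sets[OF assms(1)])
  then show ?thesis unfolding sigma_as_Min_image using assms(2,3) by (intro Min_le) auto
qed

lemma sigma_star_le_1:
  assumes "graph_on VT ET" "c \<in> VT" "\<forall>e\<in>ET. c \<in> e"
  shows "sigma VT ET \<le> 1"
proof -
  have "independent ET {c}"
    unfolding independent_def
  proof (intro ballI notI)
    fix e assume "e \<in> ET" "e \<subseteq> {c}"
    then show False using graph_on_edgeE[OF assms(1)] by blast
  qed
  moreover have "edges_outside ET {c} = 0"
  proof -
    have "{e \<in> ET. e \<inter> {c} = {}} = {}" using assms(3) by blast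
    then show ?thesis unfolding edges_outside_def by (simp only: card.empty)
  qed
  ultimately show ?thesis using sigma_le[OF assms(1), of "{c}"] assms(2) by simp
qed

text \<open>Connectivity forces every vertex to be \<open>c\<close> or a neighbour of \<open>c\<close>.\<close>
lemma connected_star:
  assumes g: "graph_on VT ET" and con: "connected_graph VT ET" and c: "c \<in> VT"
    and pendant: "\<And>y x. {c, y} \<in> ET \<Longrightarrow> {y, x} \<in> ET \<Longrightarrow> x = c"
  shows "\<forall>e\<in>ET. c \<in> e"
proof
  have near: "x = c \<or> {c, x} \<in> ET" if "(c, x) \<in> {(a, b). {a, b} \<in> ET}\<^sup>*" for x
    using that
  proof (induction rule: rtrancl_induct)
    case (step y x)
    then show ?case using pendant by (cases "y = c") auto
  qed simp
  fix e assume "e \<in> ET"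
  then obtain p q where "e = {p, q}" using graph_on_edgeE[OF g] by blast
  with \<open>e \<in> ET\<close> have e: "e = {p, q}" "p \<in> VT" using graph_on_edgeD[OF g] by auto
  show "c \<in> e"
  proof (rule ccontr)
    assume "c \<notin> e"
    then have "{c, p} \<in> ET" using near con c e unfolding connected_graph_def by blast
    then show False using pendant \<open>e \<in> ET\<close> \<open>c \<notin> e\<close> e(1) by blast
  qed
qed

text \<open>The centre is a vertex of \<open>I\<close> on some edge, or else an end of an edge not meeting \<open>I\<close>.\<close>
lemma unbranched_tree_is_star:
  assumes T: "is_tree VT ET" and I: "independent ET I"
    and unique: "\<And>x a b. x \<in> VT \<Longrightarrow> x \<notin> I \<Longrightarrow> {x, a} \<in> ET \<Longrightarrow> {x, b} \<in> ET \<Longrightarrow> a = b"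
  obtains c where "c \<in> VT" "\<forall>e\<in>ET. c \<in> e"
proof (cases "ET = {}")
  case True
  then show thesis using that T unfolding is_tree_def by blast
next
  case False
  have g: "graph_on VT ET" and con: "connected_graph VT ET" using T unfolding is_tree_def by auto
  obtain a b where ab: "{a, b} \<in> ET" using False graph_on_edgeE[OF g] by blast
  obtain c d where cd: "{c, d} \<in> ET" "c \<in> I \<or> d \<notin> I"
  proof (cases "b \<in> I")
    case True
    then show ?thesis using that[of b a] ab by (simp add: insert_commute)
  next
    case False
    then show ?thesis using that[of a b] ab by simp
  qed
  have c: "c \<in> VT" using graph_on_edgeD(2)[OF g cd(1)] .
  have outside: "y \<notin> I" if cy: "{c, y} \<in> ET" for y
  proof (cases "c \<in> I")
    case True
    show ?thesis
    proof
      assume "y \<in> I"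
      then have "{c, y} \<subseteq> I" using True by simp
      then show False using I cy unfolding independent_def by auto
    qed
  next
    case False
    then show ?thesis using unique[OF c False cy cd(1)] cd(2) by simp
  qed
  have "\<forall>e\<in>ET. c \<in> e"
  proof (rule connected_star[OF g con c])
    fix y x assume cy: "{c, y} \<in> ET" and yx: "{y, x} \<in> ET"
    have "{y, c} \<in> ET" using cy by (simp add: insert_commute)
    then show "x = c" using unique[OF graph_on_edgeD(3)[OF g cy] outside[OF cy] yx] by simp
  qed
  then show thesis using that c by blast
qed

lemma exists_branch_vertex:
  assumes T: "is_tree VT ET" and I: "independent ET I" and two: "2 \<le> sigma VT ET"
  obtains z y0 y1 where "z \<in> VT" "z \<notin> I" "y0 \<noteq> y1" "{z, y0} \<in> ET" "{z, y1} \<in> ET"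
proof (rule ccontr)
  note found = that
  assume "\<not> thesis"
  then have "a = b" if "x \<in> VT" "x \<notin> I" "{x, a} \<in> ET" "{x, b} \<in> ET" for x a b
    using that found by blast
  then obtain c where "c \<in> VT" "\<forall>e\<in>ET. c \<in> e" using unbranched_tree_is_star[OF T I] by blast
  then have "sigma VT ET \<le> 1" using T unfolding is_tree_def by (intro sigma_star_le_1) auto
  then show False using two by linarith
qed

section \<open>Branches and items\<close>

definition branch :: "'a set set \<Rightarrow> 'a \<Rightarrow> 'a \<Rightarrow> 'a set" where
  "branch E z y = {x. (y, x) \<in> {(p, q). {p, q} \<in> {e \<in> E. z \<notin> e}}\<^sup>*}"

lemma branch_root: "y \<in> branch E z y"
  unfolding branch_def by simp

lemma center_not_in_branch: "y \<noteq> z \<Longrightarrow> z \<notin> branch E z y"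
  unfolding branch_def by (auto elim: rtranclE)

lemma branch_edge_iff:
  assumes "{x, x'} \<in> E" "x \<noteq> z" "x' \<noteq> z"
  shows "x \<in> branch E z y \<longleftrightarrow> x' \<in> branch E z y"
proof -
  have "(x, x') \<in> {(p, q). {p, q} \<in> {e \<in> E. z \<notin> e}}" "(x', x) \<in> {(p, q). {p, q} \<in> {e \<in> E. z \<notin> e}}"
    using assms by (auto simp: insert_commute)
  then show ?thesis unfolding branch_def by (auto intro: rtrancl_into_rtrancl)
qed

text \<open>A path inside \<open>T - z\<close> between two neighbours of \<open>z\<close> would close a cycle through \<open>z\<close>.\<close>
lemma tree_neighbour_not_in_branch:
  assumes T: "is_tree VT ET" and z0: "{z, y0} \<in> ET" and z1: "{z, y1} \<in> ET" and "y0 \<noteq> y1"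
  shows "y1 \<notin> branch ET z y0"
proof
  let ?E = "{e \<in> ET. z \<notin> e}"
  assume "y1 \<in> branch ET z y0"
  then obtain cs where cs: "cs \<noteq> []" "hd cs = y0" "last cs = y1" "distinct cs" "walk ?E cs"
    using path_of_rtrancl[of y0 y1 ?E] unfolding branch_def by blast
  have two: "2 \<le> length cs"
  proof (rule ccontr)
    assume "\<not> 2 \<le> length cs"
    then have "hd cs = last cs" using cs(1) by (cases cs) (auto simp: not_le)
    then show False using cs(2,3) \<open>y0 \<noteq> y1\<close> by simp
  qed
  have "z \<notin> set cs"
  proof
    assume "z \<in> set cs"
    then obtain j where j: "j < length cs" "cs ! j = z" by (auto simp: in_set_conv_nth)
    define i where "i = (if j < length cs - 1 then j else j - 1)"
    have "i < length cs - 1" "j = i \<or> j = i + 1" using j(1) two unfolding i_def by auto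
    then have "{cs ! i, cs ! (i + 1)} \<in> ?E" "z \<in> {cs ! i, cs ! (i + 1)}"
      using cs(5) j(2) unfolding walk_def by auto
    then show False by blast
  qed
  then have "has_cycle ET"
    unfolding has_cycle_iff_walk using two cs z0 z1 walk_Cons[OF walk_mono[OF _ cs(5)] cs(1)]
    by (intro exI[of _ "z # cs"]) (auto simp: insert_commute)
  then show False using T unfolding is_tree_def by simp
qed

text \<open>Items are the vertices of \<open>T\<^sup>3\<close> that get embedded into \<open>S1 \<union> S2\<close>; for an optimal \<open>I\<close>
  there are \<open>\<sigma>(T)\<close> of them.\<close>
definition items :: "'a set \<Rightarrow> 'a set set \<Rightarrow> 'a set \<Rightarrow> ('a + 'a set) set" where
  "items VT ET I = Inl ` (VT \<inter> I) \<union> Inr ` {e \<in> ET. e \<inter> I = {}}"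

definition item_side :: "'a set \<Rightarrow> 'a + 'a set \<Rightarrow> bool" where
  "item_side B a = (case a of Inl x \<Rightarrow> x \<in> B | Inr e \<Rightarrow> e \<inter> B \<noteq> {})"

lemma card_items:
  assumes "finite VT" "finite ET" "I \<subseteq> VT"
  shows "card (items VT ET I) = card I + edges_outside ET I"
  using assms finite_subset unfolding items_def edges_outside_def
  by (subst card_Un_disjoint) (auto simp: Int_absorb1 card_image)

lemma items_mono: "VT \<subseteq> VT' \<Longrightarrow> ET \<subseteq> ET' \<Longrightarrow> items VT ET I \<subseteq> items VT' ET' I"
  unfolding items_def by blast

lemma item_on_edge:
  assumes "graph_on VT ET" "{z, y} \<in> ET" "z \<notin> I" "z \<notin> B"
  shows "\<exists>a\<in>items VT ET I. item_side B a \<longleftrightarrow> y \<in> B"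
proof (cases "y \<in> I")
  case True
  then have "Inl y \<in> items VT ET I" using graph_on_edgeD(3)[OF assms(1,2)] unfolding items_def by blast
  then show ?thesis unfolding item_side_def by force
next
  case False
  then have "Inr {z, y} \<in> items VT ET I" using assms(2,3) unfolding items_def by blast
  then show ?thesis using assms(4) unfolding item_side_def by force
qed

text \<open>\<open>B\<close> is the branch at \<open>y0\<close> of a vertex \<open>z \<notin> I\<close> with two neighbours \<open>y0, y1\<close>.\<close>
lemma branch_split_exists:
  assumes T: "is_tree VT ET" and I: "independent ET I" and two: "2 \<le> sigma VT ET"
  obtains z B where "z \<in> VT" "z \<notin> I" "z \<notin> B"
    "\<And>x y. {x, y} \<in> ET \<Longrightarrow> x \<noteq> z \<Longrightarrow> y \<noteq> z \<Longrightarrow> x \<in> B \<longleftrightarrow> y \<in> B"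
    "\<exists>a\<in>items VT ET I. item_side B a" "\<exists>a\<in>items VT ET I. \<not> item_side B a"
proof -
  obtain z y0 y1 where z: "z \<in> VT" "z \<notin> I" "y0 \<noteq> y1" "{z, y0} \<in> ET" "{z, y1} \<in> ET"
    using exists_branch_vertex[OF T I two] by blast
  have g: "graph_on VT ET" using T unfolding is_tree_def by simp
  have B: "z \<notin> branch ET z y0" "y0 \<in> branch ET z y0" "y1 \<notin> branch ET z y0"
    using center_not_in_branch[of y0 z ET] graph_on_edgeD(1)[OF g z(4)] branch_root
      tree_neighbour_not_in_branch[OF T z(4,5,3)] by auto
  show thesis
  proof (rule that[OF z(1,2) B(1) branch_edge_iff])
    show "\<exists>a\<in>items VT ET I. item_side (branch ET z y0) a"
      using item_on_edge[OF g z(4) z(2) B(1)] B(2) by simp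
    show "\<exists>a\<in>items VT ET I. \<not> item_side (branch ET z y0) a"
      using item_on_edge[OF g z(5) z(2) B(1)] B(3) by simp
  qed
qed

section \<open>Distributing the items over \<open>S1\<close> and \<open>S2\<close>\<close>

text \<open>Reserving some \<open>s2 \<in> S2 - S1\<close> for \<open>P2\<close> leaves enough room in \<open>S1\<close> for \<open>P1\<close>.\<close>
lemma disjoint_subsets_of_distinct_sets:
  assumes S: "finite S1" "finite S2" "card S1 = t" "card S2 = t" "S1 \<noteq> S2"
    and n: "n1 + n2 = t + 1" "1 \<le> n1" "1 \<le> n2"
  obtains P1 P2 where "P1 \<subseteq> S1" "P2 \<subseteq> S2" "P1 \<inter> P2 = {}" "card P1 = n1" "card P2 = n2"
proof -
  have "\<not> S2 \<subseteq> S1" using S card_subset_eq[of S1 S2] by auto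
  then obtain s2 where s2: "s2 \<in> S2" "s2 \<notin> S1" by blast
  have "n2 - 1 \<le> card (S2 - {s2})" using s2 S n by simp
  then obtain P2' where P2': "P2' \<subseteq> S2 - {s2}" "card P2' = n2 - 1"
    using obtain_subset_with_card_n by metis
  have "finite P2'" using P2'(1) S(2) finite_subset by blast
  define P2 where "P2 = insert s2 P2'"
  have "s2 \<notin> P2'" using P2'(1) by blast
  then have P2: "P2 \<subseteq> S2" "card P2 = n2"
    unfolding P2_def using P2' s2 \<open>finite P2'\<close> n(3) by auto
  have "card (S1 \<inter> P2) \<le> card P2'"
    using s2(2) \<open>finite P2'\<close> unfolding P2_def by (intro card_mono) auto
  then have "n1 \<le> card (S1 - P2)"
    using card_Diff_subset_Int[of S1 P2] S P2' n by (simp add: Int_commute)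
  then obtain P1 where "P1 \<subseteq> S1 - P2" "card P1 = n1"
    using obtain_subset_with_card_n by metis
  then show thesis using that P2 by blast
qed

lemma inj_into_two_distinct_sets:
  fixes side :: "'x \<Rightarrow> bool"
  assumes S: "finite S1" "finite S2" "card S1 = t" "card S2 = t" "S1 \<noteq> S2"
    and A: "finite A" "card A = t + 1" "\<exists>a\<in>A. side a" "\<exists>a\<in>A. \<not> side a"
  obtains g where "inj_on g A" "\<forall>a\<in>A. g a \<in> (if side a then S2 else S1)"
proof -
  define A1 where "A1 = {a \<in> A. \<not> side a}"
  define A2 where "A2 = {a \<in> A. side a}"
  have fin: "finite A1" "finite A2" using A(1) unfolding A1_def A2_def by auto
  have "A = A1 \<union> A2" "A1 \<inter> A2 = {}" unfolding A1_def A2_def by auto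
  then have "card A1 + card A2 = t + 1" using card_Un_disjoint[OF fin] A(2) by simp
  moreover have "A1 \<noteq> {}" "A2 \<noteq> {}" using A(3,4) unfolding A1_def A2_def by auto
  then have "1 \<le> card A1" "1 \<le> card A2" using fin by (auto simp: Suc_le_eq card_gt_0_iff)
  ultimately obtain P1 P2 where P: "P1 \<subseteq> S1" "P2 \<subseteq> S2" "P1 \<inter> P2 = {}"
    "card P1 = card A1" "card P2 = card A2"
    by (rule disjoint_subsets_of_distinct_sets[OF S])
  have "finite P1" "finite P2" using P(1,2) S(1,2) finite_subset by auto
  then obtain g1 g2 where g1: "bij_betw g1 A1 P1" and g2: "bij_betw g2 A2 P2"
    using finite_same_card_bij fin P(4,5) by metis
  define g where "g a = (if side a then g2 a else g1 a)" for a
  have "inj_on g A"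
  proof (rule inj_onI)
    fix a b assume "a \<in> A" "b \<in> A" "g a = g b"
    then show "a = b"
      using g1 g2 P(3) unfolding g_def A1_def A2_def bij_betw_def inj_on_def
      by (auto split: if_splits)
  qed
  moreover have "\<forall>a\<in>A. g a \<in> (if side a then S2 else S1)"
    using g1 g2 P(1,2) unfolding g_def A1_def A2_def bij_betw_def by auto
  ultimately show thesis using that by blast
qed

section \<open>The greedy embedding\<close>

lemma contains_copy_mono: "contains_copy V H W F \<Longrightarrow> V \<subseteq> V' \<Longrightarrow> contains_copy V' H W F"
  unfolding contains_copy_def by blast

lemma card_expansion_vertices:
  assumes "finite VT" "finite ET"
  shows "card (expansion_vertices VT ET) = card VT + card ET"
  unfolding expansion_vertices_def using assms by (subst card_Un_disjoint) (auto simp: card_image)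

locale link_setting =
  fixes H :: "'b set set" and S1 S2 V1 V2 :: "'b set" and G1 G2 :: "'b set set" and k :: nat
  assumes V_S_disjoint: "V1 \<inter> (S1 \<union> S2) = {}" "V2 \<inter> (S1 \<union> S2) = {}"
    and graphs: "graph_on V1 G1" "graph_on V2 G2"
    and min_degree: "\<forall>v\<in>V1. degree G1 v \<ge> 3 * k" "\<forall>v\<in>V2. degree G2 v \<ge> 3 * k"
    and links: "\<forall>v\<in>S1. G1 \<subseteq> link H v" "\<forall>v\<in>S2. G2 \<subseteq> link H v"
begin

definition side_S :: "bool \<Rightarrow> 'b set" where "side_S b = (if b then S2 else S1)"
definition side_V :: "bool \<Rightarrow> 'b set" where "side_V b = (if b then V2 else V1)"
definition side_G :: "bool \<Rightarrow> 'b set set" where "side_G b = (if b then G2 else G1)"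

lemma side_V_subset: "side_V b \<subseteq> V1 \<union> V2"
  unfolding side_V_def by auto

lemma side_S_subset: "side_S b \<subseteq> S1 \<union> S2"
  unfolding side_S_def by auto

lemma side_S_not_in_V: "s \<in> side_S b \<Longrightarrow> s \<notin> V1 \<union> V2"
  using V_S_disjoint unfolding side_S_def by (cases b) auto

lemma hyperedge_through_fresh:
  assumes s: "s \<in> side_S b" and x: "x \<in> side_V b" and X: "finite X" "card X < 3 * k"
  obtains y where "y \<in> side_V b" "y \<notin> X" "insert s {x, y} \<in> H"
proof -
  have g: "graph_on (side_V b) (side_G b)" using graphs unfolding side_V_def side_G_def by simp
  have "3 * k \<le> degree (side_G b) x" using min_degree x unfolding side_V_def side_G_def by (cases b) auto
  then have "card X < degree (side_G b) x" using X(2) by linarith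
  then obtain y where y: "{x, y} \<in> side_G b" "y \<notin> X" by (rule exists_fresh_neighbour[OF g X(1)])
  have "side_G b \<subseteq> link H s" using links s unfolding side_S_def side_G_def by (cases b) simp_all
  then have "insert s {x, y} \<in> H" by (rule link_edge_imp_hyperedge[OF subsetD[OF _ y(1)]])
  then show thesis by (rule that[OF graph_on_edgeD(3)[OF g y(1)] y(2)])
qed

lemma hyperedge_fresh_pair:
  assumes s: "s \<in> side_S b" and x: "x \<in> side_V b" and X: "finite X" "card X + 1 < 3 * k"
  obtains p q where "p \<in> side_V b" "q \<in> side_V b" "p \<notin> X" "q \<notin> X" "p \<noteq> q" "insert s {p, q} \<in> H"
proof -
  have "card X < 3 * k" using X(2) by simp
  then obtain p where p: "p \<in> side_V b" "p \<notin> X" by (rule hyperedge_through_fresh[OF s x X(1)])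
  have "card (insert p X) < 3 * k" using X by (simp add: card_insert_if)
  then obtain q where "q \<in> side_V b" "q \<notin> insert p X" "insert s {p, q} \<in> H"
    by (rule hyperedge_through_fresh[OF s p(1) finite_insert[THEN iffD2, OF X(1)]])
  then show thesis using that p by blast
qed

end

locale tree_embedding = link_setting H S1 S2 V1 V2 G1 G2 k
  for H :: "'b set set" and S1 S2 V1 V2 G1 G2 k +
  fixes VT0 :: "'a set" and ET0 :: "'a set set" and I B :: "'a set" and z :: 'a and w :: 'b
    and g :: "'a + 'a set \<Rightarrow> 'b"
  assumes tree: "is_tree VT0 ET0" "card VT0 \<le> k" "z \<in> VT0"
    and independent: "independent ET0 I"
    and center: "z \<notin> I" "z \<notin> B"
    and branch_closed: "\<And>x y. {x, y} \<in> ET0 \<Longrightarrow> x \<noteq> z \<Longrightarrow> y \<noteq> z \<Longrightarrow> x \<in> B \<longleftrightarrow> y \<in> B"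
    and root: "w \<in> V1" "w \<in> V2"
    and items_inj: "inj_on g (items VT0 ET0 I)"
    and items_side: "\<And>a. a \<in> items VT0 ET0 I \<Longrightarrow> g a \<in> side_S (item_side B a)"
begin

text \<open>The invariant of the greedy embedding of the expansion of a subtree containing \<open>z\<close>.\<close>
definition good_embedding :: "'a set \<Rightarrow> 'a set set \<Rightarrow> ('a + 'a set \<Rightarrow> 'b) \<Rightarrow> bool" where
  "good_embedding VT ET f \<longleftrightarrow> inj_on f (expansion_vertices VT ET)
    \<and> f ` expansion_vertices VT ET \<subseteq> g ` items VT ET I \<union> V1 \<union> V2
    \<and> (\<forall>e\<in>ET. f ` insert (Inr e) (Inl ` e) \<in> H)
    \<and> f (Inl z) = w
    \<and> (\<forall>x\<in>VT - I - {z}. f (Inl x) \<in> side_V (x \<in> B))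
    \<and> (\<forall>x\<in>VT \<inter> I. f (Inl x) = g (Inl x))"

lemma good_embedding_single: "good_embedding {z} {} (\<lambda>_. w)"
  unfolding good_embedding_def expansion_vertices_def using root center by auto

lemma good_embedding_new_item:
  assumes "good_embedding VT ET f" "VT \<subseteq> VT0" "ET \<subseteq> ET0"
    and "a \<in> items VT0 ET0 I" "a \<notin> items VT ET I"
  shows "g a \<notin> f ` expansion_vertices VT ET"
proof
  assume "g a \<in> f ` expansion_vertices VT ET"
  moreover have "g a \<notin> V1 \<union> V2" using side_S_not_in_V items_side[OF assms(4)] by blast
  ultimately obtain a' where "a' \<in> items VT ET I" "g a = g a'"
    using assms(1) unfolding good_embedding_def by blast
  moreover have "items VT ET I \<subseteq> items VT0 ET0 I" using assms(2,3) by (rule items_mono)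
  ultimately show False using items_inj assms(4,5) unfolding inj_on_def by blast
qed

lemma good_embedding_neighbour_side:
  assumes "good_embedding VT ET f" "u \<in> VT" "u \<notin> I" "{u, v} \<in> ET0" "v \<noteq> z"
  shows "f (Inl u) \<in> side_V (v \<in> B)"
proof (cases "u = z")
  case True
  then show ?thesis using assms(1) root unfolding good_embedding_def side_V_def by simp
next
  case False
  then have "f (Inl u) \<in> side_V (u \<in> B)" using assms(1-3) unfolding good_embedding_def by blast
  then show ?thesis using branch_closed[OF assms(4) False assms(5)] by simp
qed

lemma good_embedding_add_leaf:
  assumes good: "good_embedding VT ET f" and g: "graph_on VT ET"
    and uv: "u \<in> VT" "v \<notin> VT" "v \<noteq> z"
    and fresh: "p \<notin> f ` expansion_vertices VT ET" "q \<notin> f ` expansion_vertices VT ET" "p \<noteq> q"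
    and range: "{p, q} \<subseteq> g ` items (insert v VT) (insert {u, v} ET) I \<union> V1 \<union> V2"
    and edge: "{f (Inl u), p, q} \<in> H"
    and p_side: "v \<notin> I \<Longrightarrow> p \<in> side_V (v \<in> B)" "v \<in> I \<Longrightarrow> p = g (Inl v)"
  shows "good_embedding (insert v VT) (insert {u, v} ET) (f(Inl v := p, Inr {u, v} := q))"
    (is "good_embedding ?VT ?ET ?f")
proof -
  let ?X = "expansion_vertices VT ET"
  have new: "Inl v \<notin> ?X" "Inr {u, v} \<notin> ?X"
    using uv(2) graph_on_edgeD(3)[OF g] unfolding expansion_vertices_def by auto
  have X: "expansion_vertices ?VT ?ET = insert (Inl v) (insert (Inr {u, v}) ?X)"
    unfolding expansion_vertices_def by auto
  have agree: "?f x = f x" if "x \<in> ?X" for x using that new by auto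
  then have "inj_on ?f ?X" "?f ` ?X = f ` ?X"
    using good inj_on_cong[of ?X ?f f] unfolding good_embedding_def by (auto cong: image_cong)
  then have "inj_on ?f (expansion_vertices ?VT ?ET)"
    unfolding X using new fresh by (auto simp: inj_on_insert)
  moreover have "?f ` expansion_vertices ?VT ?ET \<subseteq> g ` items ?VT ?ET I \<union> V1 \<union> V2"
  proof -
    have "f ` ?X \<subseteq> g ` items ?VT ?ET I \<union> V1 \<union> V2"
      using good items_mono[of VT ?VT ET ?ET I] unfolding good_embedding_def by blast
    then show ?thesis unfolding X using \<open>?f ` ?X = f ` ?X\<close> range by auto
  qed
  moreover have "\<forall>e\<in>?ET. ?f ` insert (Inr e) (Inl ` e) \<in> H"
  proof -
    have "?f ` insert (Inr e) (Inl ` e) = f ` insert (Inr e) (Inl ` e)" if "e \<in> ET" for e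
      using that g agree unfolding graph_on_def expansion_vertices_def by (intro image_cong) blast+
    moreover have "?f ` insert (Inr {u, v}) (Inl ` {u, v}) = {f (Inl u), p, q}" using new uv by auto
    ultimately show ?thesis using good edge unfolding good_embedding_def by auto
  qed
  ultimately show ?thesis
    using good p_side uv(3) unfolding good_embedding_def by auto
qed

context
  fixes VT :: "'a set" and ET :: "'a set set" and f :: "'a + 'a set \<Rightarrow> 'b" and u v :: 'a
  assumes good: "good_embedding VT ET f" and T: "is_tree VT ET" and z_in: "z \<in> VT"
    and uv: "u \<in> VT" "v \<notin> VT" and sub: "insert v VT \<subseteq> VT0" "insert {u, v} ET \<subseteq> ET0"
begin

private abbreviation (input) "X \<equiv> f ` expansion_vertices VT ET"
private abbreviation (input) "new_items \<equiv> items (insert v VT) (insert {u, v} ET) I"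

private lemma graph: "graph_on VT ET"
  using T unfolding is_tree_def by simp

private lemma leaf_not_center: "v \<noteq> z"
  using z_in uv(2) by blast

private lemma new_item_fresh: "a \<in> new_items \<Longrightarrow> a \<notin> items VT ET I \<Longrightarrow> g a \<notin> X"
  using good_embedding_new_item[OF good] sub items_mono[OF sub] by blast

private lemma new_item_side: "a \<in> new_items \<Longrightarrow> g a \<in> side_S (item_side B a)"
  using items_side items_mono[OF sub] by blast

private lemma parent_side: "u \<notin> I \<Longrightarrow> f (Inl u) \<in> side_V (v \<in> B)"
  using good_embedding_neighbour_side[OF good uv(1) _ _ leaf_not_center] sub by blast

text \<open>The expansion of a tree on fewer than \<open>k\<close> vertices has at most \<open>2k - 3\<close> vertices,
  so the \<open>3k\<close> lower bound on the degrees always leaves fresh neighbours.\<close>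
private lemma few_used: "finite X" "card X + 1 < 3 * k"
proof -
  have fin: "finite VT" "finite ET" using graph graph_on_finite_edges unfolding graph_on_def by auto
  then have fin_exp: "finite (expansion_vertices VT ET)" unfolding expansion_vertices_def by simp
  then show "finite X" by simp
  have "card (insert v VT) \<le> card VT0"
    using sub(1) tree(1) card_mono unfolding is_tree_def graph_on_def by blast
  then have "card VT < k" using tree(2) uv(2) fin(1) by simp
  moreover have "card X \<le> card VT + card ET"
    using card_image_le[OF fin_exp, of f] card_expansion_vertices[OF fin] by simp
  ultimately show "card X + 1 < 3 * k" using tree_card_edges[OF T] by linarith
qed

lemma good_embedding_extend_leaf_in_I:
  assumes "v \<in> I"
  shows "\<exists>f'. good_embedding (insert v VT) (insert {u, v} ET) f'"
proof -
  have "u \<notin> I"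
  proof
    assume "u \<in> I"
    then have "{u, v} \<subseteq> I" using assms by simp
    then show False using independent sub(2) unfolding independent_def by blast
  qed
  have item: "Inl v \<in> new_items" "Inl v \<notin> items VT ET I" using assms uv(2) unfolding items_def by auto
  then have s: "g (Inl v) \<in> side_S (v \<in> B)" using new_item_side[OF item(1)] by (simp add: item_side_def)
  have "card X < 3 * k" using few_used(2) by simp
  then obtain q where q: "q \<in> side_V (v \<in> B)" "q \<notin> X" "insert (g (Inl v)) {f (Inl u), q} \<in> H"
    by (rule hyperedge_through_fresh[OF s parent_side[OF \<open>u \<notin> I\<close>] few_used(1)])
  have "g (Inl v) \<noteq> q" using side_S_not_in_V[OF s] side_V_subset q(1) by blast
  moreover have "{g (Inl v), q} \<subseteq> g ` new_items \<union> V1 \<union> V2" using item(1) q(1) side_V_subset by blast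
  moreover have "{f (Inl u), g (Inl v), q} \<in> H" using q(3) by (simp add: insert_commute)
  ultimately have "good_embedding (insert v VT) (insert {u, v} ET) (f(Inl v := g (Inl v), Inr {u, v} := q))"
    by (rule good_embedding_add_leaf[OF good graph uv leaf_not_center new_item_fresh[OF item] q(2)])
      (use assms in simp_all)
  then show ?thesis by blast
qed

lemma good_embedding_extend_parent_in_I:
  assumes "u \<in> I" "v \<notin> I"
  shows "\<exists>f'. good_embedding (insert v VT) (insert {u, v} ET) f'"
proof -
  have "u \<noteq> z" using assms(1) center(1) by blast
  then have same_side: "(u \<in> B) = (v \<in> B)" using branch_closed sub(2) leaf_not_center by blast
  have item: "Inl u \<in> new_items" using assms(1) uv(1) unfolding items_def by auto
  have "f (Inl u) = g (Inl u)" using assms(1) uv(1) good unfolding good_embedding_def by blast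
  then have s: "f (Inl u) \<in> side_S (v \<in> B)"
    using new_item_side[OF item] same_side by (simp add: item_side_def)
  have "w \<in> side_V (v \<in> B)" using root unfolding side_V_def by simp
  then obtain p q where p: "p \<in> side_V (v \<in> B)" and q: "q \<in> side_V (v \<in> B)"
    and fresh: "p \<notin> X" "q \<notin> X" "p \<noteq> q" and edge: "insert (f (Inl u)) {p, q} \<in> H"
    by (rule hyperedge_fresh_pair[OF s _ few_used])
  have "{p, q} \<subseteq> g ` new_items \<union> V1 \<union> V2" using p q side_V_subset by blast
  then have "good_embedding (insert v VT) (insert {u, v} ET) (f(Inl v := p, Inr {u, v} := q))"
    by (rule good_embedding_add_leaf[OF good graph uv leaf_not_center fresh])
      (use edge p assms(2) in simp_all)
  then show ?thesis by blast
qed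

lemma good_embedding_extend_edge_item:
  assumes "u \<notin> I" "v \<notin> I"
  shows "\<exists>f'. good_embedding (insert v VT) (insert {u, v} ET) f'"
proof -
  have item: "Inr {u, v} \<in> new_items" "Inr {u, v} \<notin> items VT ET I"
    using assms uv(2) graph_on_edgeD(3)[OF graph, of u v] unfolding items_def by auto
  have "({u, v} \<inter> B \<noteq> {}) = (v \<in> B)"
  proof (cases "u = z")
    case True
    then show ?thesis using center(2) by auto
  next
    case False
    then show ?thesis using branch_closed[of u v] sub(2) leaf_not_center by auto
  qed
  then have s: "g (Inr {u, v}) \<in> side_S (v \<in> B)"
    using new_item_side[OF item(1)] by (simp add: item_side_def)
  have "card X < 3 * k" using few_used(2) by simp
  then obtain p where p: "p \<in> side_V (v \<in> B)" "p \<notin> X" "insert (g (Inr {u, v})) {f (Inl u), p} \<in> H"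
    by (rule hyperedge_through_fresh[OF s parent_side[OF assms(1)] few_used(1)])
  have "p \<noteq> g (Inr {u, v})" using side_S_not_in_V[OF s] side_V_subset p(1) by blast
  moreover have "{p, g (Inr {u, v})} \<subseteq> g ` new_items \<union> V1 \<union> V2"
    using item(1) p(1) side_V_subset by blast
  moreover have "{f (Inl u), p, g (Inr {u, v})} \<in> H" using p(3) by (simp add: insert_commute)
  ultimately have "good_embedding (insert v VT) (insert {u, v} ET) (f(Inl v := p, Inr {u, v} := g (Inr {u, v})))"
    by (rule good_embedding_add_leaf[OF good graph uv leaf_not_center p(2) new_item_fresh[OF item]])
      (use p(1) assms(2) in simp_all)
  then show ?thesis by blast
qed

lemma good_embedding_extend: "\<exists>f'. good_embedding (insert v VT) (insert {u, v} ET) f'"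
  using good_embedding_extend_leaf_in_I good_embedding_extend_parent_in_I
    good_embedding_extend_edge_item by blast

end

lemma good_embedding_exists: "\<exists>f. good_embedding VT0 ET0 f"
proof -
  have "VT \<subseteq> VT0 \<longrightarrow> ET \<subseteq> ET0 \<longrightarrow> (\<exists>f. good_embedding VT ET f)"
    if "is_tree VT ET" "z \<in> VT" for VT ET
    using that
  proof (induction rule: tree_leaf_induct)
    case single
    show ?case using good_embedding_single by blast
  next
    case (add_leaf VT ET u v)
    show ?case
    proof (intro impI)
      assume sub: "insert v VT \<subseteq> VT0" "insert {u, v} ET \<subseteq> ET0"
      then obtain f where "good_embedding VT ET f" using add_leaf.IH by auto
      then show "\<exists>f'. good_embedding (insert v VT) (insert {u, v} ET) f'"
        by (rule good_embedding_extend[OF _ add_leaf.hyps(1-4) sub])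
    qed
  qed
  then show ?thesis using tree(1,3) by blast
qed

lemma contains_copy_expansion:
  "contains_copy (S1 \<union> S2 \<union> V1 \<union> V2) H (expansion_vertices VT0 ET0) (expansion_edges ET0)"
proof -
  obtain f where f: "good_embedding VT0 ET0 f" using good_embedding_exists by blast
  have "g ` items VT0 ET0 I \<subseteq> S1 \<union> S2" using items_side side_S_subset by blast
  then have "f ` expansion_vertices VT0 ET0 \<subseteq> S1 \<union> S2 \<union> V1 \<union> V2"
    using f unfolding good_embedding_def by blast
  moreover have "\<forall>e\<in>expansion_edges ET0. f ` e \<in> H"
    using f unfolding good_embedding_def expansion_edges_def by blast
  ultimately show ?thesis using f unfolding good_embedding_def contains_copy_def by blast
qed

end

theorem proposition2p8:
  fixes VT :: "'a set" and ET :: "'a set set" and k :: nat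
    and V :: "'b set" and H :: "'b set set"
    and S1 S2 V1 V2 :: "'b set" and G1 G2 :: "'b set set"
  assumes tree: "is_tree VT ET" and k: "card VT = k"
    and HV: "finite V" "hypergraph3_on V H"
    and S: "S1 \<subseteq> V" "S2 \<subseteq> V" "S1 \<noteq> S2"
       "card S1 = sigma VT ET - 1" "card S2 = sigma VT ET - 1"
    and Vi: "V1 \<subseteq> V - (S1 \<union> S2)" "V2 \<subseteq> V - (S1 \<union> S2)" "V1 \<inter> V2 \<noteq> {}"
    and G: "graph_on V1 G1" "graph_on V2 G2"
    and deg: "\<forall>v\<in>V1. degree G1 v \<ge> 3 * k" "\<forall>v\<in>V2. degree G2 v \<ge> 3 * k"
    and lnk: "\<forall>v\<in>S1. G1 \<subseteq> link H v" "\<forall>v\<in>S2. G2 \<subseteq> link H v"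
  shows "contains_copy V H (expansion_vertices VT ET) (expansion_edges ET)"
proof -
  interpret link_setting H S1 S2 V1 V2 G1 G2 k
    using G deg lnk by unfold_locales (assumption | use Vi in blast)+
  have g: "graph_on VT ET" and fin: "finite VT" "finite ET"
    using tree graph_on_finite_edges unfolding is_tree_def graph_on_def by auto
  obtain I where I: "I \<subseteq> VT" "independent ET I" "card I + edges_outside ET I = sigma VT ET"
    by (rule sigma_attained[OF g])
  have finS: "finite S1" "finite S2" using S(1,2) HV(1) finite_subset by auto
  have "2 \<le> sigma VT ET" using S(3-5) finS by (cases "2 \<le> sigma VT ET") auto
  then obtain z B where split: "z \<in> VT" "z \<notin> I" "z \<notin> B"
    "\<And>x y. {x, y} \<in> ET \<Longrightarrow> x \<noteq> z \<Longrightarrow> y \<noteq> z \<Longrightarrow> x \<in> B \<longleftrightarrow> y \<in> B"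
    "\<exists>a\<in>items VT ET I. item_side B a" "\<exists>a\<in>items VT ET I. \<not> item_side B a"
    using branch_split_exists[OF tree I(2)] by blast
  have "finite (items VT ET I)" "card (items VT ET I) = sigma VT ET - 1 + 1"
    using card_items[OF fin I(1)] I(3) \<open>2 \<le> sigma VT ET\<close> fin unfolding items_def by simp_all
  then obtain h where h: "inj_on h (items VT ET I)"
    "\<forall>a\<in>items VT ET I. h a \<in> (if item_side B a then S2 else S1)"
    using inj_into_two_distinct_sets[OF finS S(4,5) S(3)] split(5,6) by blast
  obtain w where w: "w \<in> V1" "w \<in> V2" using Vi(3) by blast
  interpret tree_embedding H S1 S2 V1 V2 G1 G2 k VT ET I B z w h
    using tree k I(2) split(1-4) w h by unfold_locales (auto simp: side_S_def)
  have "S1 \<union> S2 \<union> V1 \<union> V2 \<subseteq> V" using S(1,2) Vi(1,2) by blast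
  then show ?thesis by (rule contains_copy_mono[OF contains_copy_expansion])
qed

end
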